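(* Let $\mathcal{D}$ be a set with at least three elements. For every $x\in\mathcal{D}$ and every function $a_x:\mathcal{D}\setminus\{x\}\to\{\mathtt{match},\mathtt{switch}\}$, there exists $x'\in\mathcal{D}$ such that $$W(\theta,x',\mathtt{switch})\geq W(\theta,x,a_x(d_\theta(x)))$$ for all $\theta\in\mathcal{D}$ and all admissible functions $d_\theta$. That is, the class of always-switching strategies $(x',\mathtt{switch})$ is weakly dominant.
   Context: A strategy is a pair $(x,a_x)$ where $x\in\mathcal{D}$ and $a_x$ is a function on $\mathcal{D}\setminus\{x\}$ with values in $\{\mathtt{match},\mathtt{switch}\}$. The always-switching strategy $(x,\mathtt{switch})$ is the one with $a_x$ constantly equal to $\mathtt{switch}$. For each $\theta\in\mathcal{D}$, a function $d_\theta:\mathcal{D}\to\mathcal{D}$ is called admissible if $d_\theta(x)=\theta$ whenever $x\neq\theta$, and $d_\theta(\theta)\neq\theta$. The payoff function is $W(\theta,x,\mathtt{match})=1(x=\theta)$ and $W(\theta,x,\mathtt{switch})=1(x\neq\theta)$, where $1(\cdot)$ denotes the indicator. A strategy $(x,a_x)$ receives the payoff $W(\theta,x,a_x(d_\theta(x)))$ when the parameters are $\theta$ and $d_\theta$. *)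

theory Defs
  imports Main
begin

datatype action = match | switch

definition W :: "'a \<Rightarrow> 'a \<Rightarrow> action \<Rightarrow> nat" where
  "W \<theta> x act = (case act of match \<Rightarrow> (if x = \<theta> then 1 else 0)
                              | switch \<Rightarrow> (if x \<noteq> \<theta> then 1 else 0))"

definition admissible :: "'a set \<Rightarrow> 'a \<Rightarrow> ('a \<Rightarrow> 'a) \<Rightarrow> bool" where
  "admissible D \<theta> d \<longleftrightarrow> (\<forall>y\<in>D. d y \<in> D) \<and> (\<forall>x\<in>D. x \<noteq> \<theta> \<longrightarrow> d x = \<theta>) \<and> d \<theta> \<noteq> \<theta>"

end

theory Submission
  imports Defs
begin

text \<open>If the strategy answers \<open>match\<close> to some revealed door \<open>y \<noteq> x\<close>, always switching from \<open>y\<close>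
dominates it: it loses only when \<open>\<theta> = y\<close>, and then the revealed door is \<open>y\<close>, so the strategy
matches on \<open>x \<noteq> \<theta>\<close> and loses as well. Otherwise the strategy switches whenever \<open>\<theta> = x\<close>, so
always switching from \<open>x\<close> dominates it.\<close>

lemma W_le_one: "W \<theta> x act \<le> 1"
  by (simp add: W_def split: action.split)

lemma W_switch_off_state: "x \<noteq> \<theta> \<Longrightarrow> W \<theta> x switch = 1"
  by (simp add: W_def)

lemma switch_dominates_off_state: "x' \<noteq> \<theta> \<Longrightarrow> W \<theta> x act \<le> W \<theta> x' switch"
proof -
  assume "x' \<noteq> \<theta>"
  then have "W \<theta> x' switch = 1" by (rule W_switch_off_state)
  with W_le_one show ?thesis by (simp only:)
qed

lemma switch_dominates_matching_strategy:
  assumes "y \<noteq> x" "a y = match" "x \<in> D" "admissible D \<theta> d"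
  shows "W \<theta> x (a (d x)) \<le> W \<theta> y switch"
proof (cases "y = \<theta>")
  case True
  with assms have "d x = y" by (simp add: admissible_def)
  with True assms show ?thesis by (simp add: W_def)
next
  case False
  then show ?thesis by (rule switch_dominates_off_state)
qed

lemma switch_dominates_switching_strategy:
  assumes "\<forall>y\<in>D. y \<noteq> x \<longrightarrow> a y = switch" "\<theta> \<in> D" "admissible D \<theta> d"
  shows "W \<theta> x (a (d x)) \<le> W \<theta> x switch"
proof (cases "x = \<theta>")
  case True
  with assms have "d x \<in> D" "d x \<noteq> x" by (auto simp: admissible_def)
  with assms(1) have "a (d x) = switch" by blast
  then show ?thesis by simp
next
  case False
  then show ?thesis by (rule switch_dominates_off_state)
qed

theorem mainTheorem1:
  fixes D :: "'a set" and x :: 'a and a :: "'a \<Rightarrow> action"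
  assumes "\<exists>p q r. p \<in> D \<and> q \<in> D \<and> r \<in> D \<and> p \<noteq> q \<and> q \<noteq> r \<and> p \<noteq> r"
    and "x \<in> D"
  shows "\<exists>x'\<in>D. \<forall>\<theta>\<in>D. \<forall>d. admissible D \<theta> d \<longrightarrow>
           W \<theta> x' switch \<ge> W \<theta> x (a (d x))"
proof (cases "\<exists>y\<in>D. y \<noteq> x \<and> a y = match")
  case True
  then obtain y where y: "y \<in> D" "y \<noteq> x" "a y = match" by blast
  show ?thesis
  proof (intro bexI[OF _ y(1)] ballI allI impI)
    fix \<theta> d assume "admissible D \<theta> d"
    with y(2,3) assms(2) show "W \<theta> x (a (d x)) \<le> W \<theta> y switch"
      by (rule switch_dominates_matching_strategy)
  qed
next
  case False
  then have switching: "\<forall>y\<in>D. y \<noteq> x \<longrightarrow> a y = switch"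
    by (metis action.exhaust)
  show ?thesis
  proof (intro bexI[OF _ assms(2)] ballI allI impI)
    fix \<theta> d assume "\<theta> \<in> D" "admissible D \<theta> d"
    with switching show "W \<theta> x (a (d x)) \<le> W \<theta> x switch"
      by (rule switch_dominates_switching_strategy)
  qed
qed

end
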